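(* Let $\mathcal{H}$ be a Hilbert space and $A$ a self-adjoint operator on $\mathcal{H}$, semi-bounded below, with compact resolvent. Let $\mathcal{L}\subset\mathrm{D}(A)$ be a finite-dimensional subspace. Let $s,t\notin\mathrm{Spec}(A)$ with $t<s$, and let $u\in\mathcal{L}$ be such that either $\mathfrak{a}^1_t(u,u)<0$ or $\mathfrak{a}^1_s(u,u)>0$. Then \[ t+\frac{\mathfrak{a}^2_t(u,u)}{\mathfrak{a}^1_t(u,u)}\le s+\frac{\mathfrak{a}^2_s(u,u)}{\mathfrak{a}^1_s(u,u)}.\]
   Context: For $r\in\mathbb{R}$ and $u,v\in\mathrm{D}(A)$, $\mathfrak{a}^1_r(u,v)=\langle (A-r)u,v\rangle$ and $\mathfrak{a}^2_r(u,v)=\langle (A-r)u,(A-r)v\rangle$. *)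

theory Defs
  imports "HOL-Analysis.Analysis"
begin

text \<open>HOL-Analysis only provides real inner product spaces, so complex
inner product spaces are introduced here as a type class: a real normed
vector space with a compatible complex scalar multiplication and a
sesquilinear (linear in the first, conjugate-linear in the second argument),
Hermitian, positive definite inner product inducing the norm.\<close>

class complex_inner_space = real_normed_vector +
  fixes scaleC :: "complex \<Rightarrow> 'a \<Rightarrow> 'a"
    and cinner :: "'a \<Rightarrow> 'a \<Rightarrow> complex"
  assumes scaleC_add_right: "scaleC a (x + y) = scaleC a x + scaleC a y"
    and scaleC_add_left: "scaleC (a + b) x = scaleC a x + scaleC b x"
    and scaleC_scaleC: "scaleC a (scaleC b x) = scaleC (a * b) x"
    and scaleC_one: "scaleC 1 x = x"
    and scaleR_scaleC: "scaleR r x = scaleC (complex_of_real r) x"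
    and cinner_add_left: "cinner (x + y) z = cinner x z + cinner y z"
    and cinner_scaleC_left: "cinner (scaleC a x) y = a * cinner x y"
    and cinner_commute: "cinner y x = cnj (cinner x y)"
    and cinner_nonneg: "0 \<le> Re (cinner x x)"
    and cinner_eq_zero_iff: "cinner x x = 0 \<longleftrightarrow> x = 0"
    and norm_eq_sqrt_cinner: "norm x = sqrt (Re (cinner x x))"

class complex_hilbert_space = complex_inner_space + complete_space

definition csubspace :: "'a::complex_inner_space set \<Rightarrow> bool" where
  "csubspace S \<longleftrightarrow> module.subspace scaleC S"

definition finite_dim_csubspace :: "'a::complex_inner_space set \<Rightarrow> bool" where
  "finite_dim_csubspace L \<longleftrightarrow> csubspace L \<and> (\<exists>B. finite B \<and> L = module.span scaleC B)"

definition clinear_on :: "'a::complex_inner_space set \<Rightarrow> ('a \<Rightarrow> 'a) \<Rightarrow> bool" where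
  "clinear_on D A \<longleftrightarrow>
     (\<forall>x\<in>D. \<forall>y\<in>D. A (x + y) = A x + A y) \<and>
     (\<forall>a. \<forall>x\<in>D. A (scaleC a x) = scaleC a (A x))"

text \<open>Self-adjoint: densely defined linear operator on a subspace D(A) with
A* = A, i.e. symmetric and D(A*) \<subseteq> D(A) (with A* v = A v there).\<close>
definition self_adjoint_op :: "('a::complex_hilbert_space \<Rightarrow> 'a) \<Rightarrow> 'a set \<Rightarrow> bool" where
  "self_adjoint_op A D \<longleftrightarrow>
     csubspace D \<and> closure D = UNIV \<and> clinear_on D A \<and>
     (\<forall>u\<in>D. \<forall>v\<in>D. cinner (A u) v = cinner u (A v)) \<and>
     (\<forall>v w. (\<forall>u\<in>D. cinner (A u) v = cinner u w) \<longrightarrow> v \<in> D \<and> A v = w)"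

definition semibounded_below :: "('a::complex_hilbert_space \<Rightarrow> 'a) \<Rightarrow> 'a set \<Rightarrow> bool" where
  "semibounded_below A D \<longleftrightarrow> (\<exists>c::real. \<forall>u\<in>D. c * (norm u)\<^sup>2 \<le> Re (cinner (A u) u))"

definition is_resolvent ::
    "('a::complex_hilbert_space \<Rightarrow> 'a) \<Rightarrow> 'a set \<Rightarrow> complex \<Rightarrow> ('a \<Rightarrow> 'a) \<Rightarrow> bool" where
  "is_resolvent A D z R \<longleftrightarrow>
     bounded_linear R \<and>
     (\<forall>f. R f \<in> D \<and> A (R f) - scaleC z (R f) = f) \<and>
     (\<forall>u\<in>D. R (A u - scaleC z u) = u)"

definition op_spectrum :: "('a::complex_hilbert_space \<Rightarrow> 'a) \<Rightarrow> 'a set \<Rightarrow> complex set" where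
  "op_spectrum A D = {z. \<not> (\<exists>R. is_resolvent A D z R)}"

definition compact_operator :: "('a::real_normed_vector \<Rightarrow> 'b::real_normed_vector) \<Rightarrow> bool" where
  "compact_operator R \<longleftrightarrow> bounded_linear R \<and> (\<forall>S. bounded S \<longrightarrow> compact (closure (R ` S)))"

definition has_compact_resolvent :: "('a::complex_hilbert_space \<Rightarrow> 'a) \<Rightarrow> 'a set \<Rightarrow> bool" where
  "has_compact_resolvent A D \<longleftrightarrow> (\<exists>z R. is_resolvent A D z R \<and> compact_operator R)"

definition form1 :: "('a::complex_inner_space \<Rightarrow> 'a) \<Rightarrow> real \<Rightarrow> 'a \<Rightarrow> 'a \<Rightarrow> complex" where
  "form1 A r u v = cinner (A u - scaleC (complex_of_real r) u) v"

definition form2 :: "('a::complex_inner_space \<Rightarrow> 'a) \<Rightarrow> real \<Rightarrow> 'a \<Rightarrow> 'a \<Rightarrow> complex" where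
  "form2 A r u v = cinner (A u - scaleC (complex_of_real r) u) (A v - scaleC (complex_of_real r) v)"

end

theory Submission
  imports Defs
begin

text \<open>With \<open>a = Re \<langle>Au,u\<rangle>\<close>, \<open>n = \<parallel>u\<parallel>\<^sup>2\<close> and \<open>b = \<parallel>Au\<parallel>\<^sup>2\<close> we have
\<open>Re a\<^sup>1\<^sub>r(u,u) = a - r n\<close> and \<open>Re a\<^sup>2\<^sub>r(u,u) = b - 2 r a + r\<^sup>2 n\<close>. Since the latter is
nonnegative for every \<open>r\<close>, its discriminant gives \<open>a\<^sup>2 \<le> b n\<close>, and
\<open>r + (b - 2 r a + r\<^sup>2 n) / (a - r n) = a/n + (b - a\<^sup>2/n) / (a - r n)\<close>
is nondecreasing on either side of its pole \<open>r = a/n\<close>. The hypothesis on \<open>u\<close>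
says precisely that \<open>t < s\<close> lie on the same side of that pole.\<close>

lemma cinner_diff_left: "cinner (x - y) z = cinner x z - cinner (y::'a::complex_inner_space) z"
  using cinner_add_left[of "x - y" y z] by simp

lemma cinner_scaleC_right: "cinner x (scaleC a y) = cnj a * cinner x (y::'a::complex_inner_space)"
  by (metis cinner_commute cinner_scaleC_left complex_cnj_mult)

lemma cinner_diff_right: "cinner x (y - z) = cinner x y - cinner x (z::'a::complex_inner_space)"
  by (metis cinner_commute cinner_diff_left complex_cnj_diff)

lemma Re_form1: "Re (form1 A r u u) = Re (cinner (A u) u) - r * Re (cinner u u)"
  unfolding form1_def by (simp add: cinner_diff_left cinner_scaleC_left)

lemma Re_form2:
  "Re (form2 A r u u) = Re (cinner (A u) (A u)) - 2 * r * Re (cinner (A u) u) + r\<^sup>2 * Re (cinner u u)"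
proof -
  have "Re (cinner u (A u)) = Re (cinner (A u) u)"
    by (subst cinner_commute) simp
  then show ?thesis
    unfolding form2_def
    by (simp add: cinner_diff_left cinner_diff_right cinner_scaleC_left cinner_scaleC_right
        power2_eq_square algebra_simps)
qed

lemma Re_form2_nonneg: "0 \<le> Re (form2 A r u u)"
  unfolding form2_def by (rule cinner_nonneg)

lemma quadratic_nonneg_imp_discriminant:
  fixes a b n :: real
  assumes "0 \<le> n" and nonneg: "\<And>r. 0 \<le> b - 2 * r * a + r\<^sup>2 * n"
  shows "a\<^sup>2 \<le> b * n"
proof (cases "n = 0")
  case True
  have "a = 0"
  proof (rule ccontr)
    assume "a \<noteq> 0"
    then show False
      using nonneg[of "(b + 1) / (2 * a)"] True by simp
  qed
  with True show ?thesis by simp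
next
  case False
  with \<open>0 \<le> n\<close> have "0 < n" by simp
  then show ?thesis
    using nonneg[of "a / n"] by (simp add: power2_eq_square field_simps)
qed

lemma inverse_mono_same_sign:
  fixes x y :: real
  assumes "x < y" and "0 < x * y"
  shows "1 / y \<le> 1 / x"
proof -
  have "x \<noteq> 0" "y \<noteq> 0"
    using assms(2) by auto
  then have "1 / y - 1 / x = (x - y) / (x * y)"
    by (simp add: field_simps)
  also have "\<dots> < 0"
    using assms by (simp add: divide_neg_pos)
  finally show ?thesis by simp
qed

lemma shifted_quotient_mono:
  fixes a b n s t :: real
  assumes n: "0 \<le> n" and discr: "a\<^sup>2 \<le> b * n" and "t < s"
    and side: "a - t * n < 0 \<or> 0 < a - s * n"
  shows "t + (b - 2 * t * a + t\<^sup>2 * n) / (a - t * n) \<le> s + (b - 2 * s * a + s\<^sup>2 * n) / (a - s * n)"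
proof (cases "n = 0")
  case True
  then show ?thesis using discr side by simp
next
  case False
  with n have "0 < n" by simp
  define c where "c = b - a\<^sup>2 / n"
  have "0 \<le> c"
    using discr \<open>0 < n\<close> by (simp add: c_def field_simps)
  have pole_form: "r + (b - 2 * r * a + r\<^sup>2 * n) / (a - r * n) = a / n + c / (a - r * n)"
    if "a - r * n \<noteq> 0" for r
    using that \<open>0 < n\<close> by (simp add: c_def field_simps power2_eq_square)
  have "a - s * n < a - t * n"
    using \<open>t < s\<close> \<open>0 < n\<close> by simp
  moreover from this side have "0 < (a - s * n) * (a - t * n)"
    by (metis mult_neg_neg mult_pos_pos order.strict_trans)
  ultimately have "c * (1 / (a - t * n)) \<le> c * (1 / (a - s * n))"
    by (intro mult_left_mono inverse_mono_same_sign \<open>0 \<le> c\<close>)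
  moreover have "a - t * n \<noteq> 0" "a - s * n \<noteq> 0"
    using \<open>0 < (a - s * n) * (a - t * n)\<close> by auto
  ultimately show ?thesis
    by (simp add: pole_form)
qed

theorem lemma3p1:
  fixes A :: "'a::complex_hilbert_space \<Rightarrow> 'a" and D L :: "'a set"
    and s t :: real and u :: 'a
  assumes "self_adjoint_op A D"
    and "semibounded_below A D"
    and "has_compact_resolvent A D"
    and "finite_dim_csubspace L" and "L \<subseteq> D"
    and "complex_of_real s \<notin> op_spectrum A D" and "complex_of_real t \<notin> op_spectrum A D"
    and "t < s"
    and "u \<in> L"
    and "Re (form1 A t u u) < 0 \<or> Re (form1 A s u u) > 0"
  shows "t + Re (form2 A t u u) / Re (form1 A t u u) \<le> s + Re (form2 A s u u) / Re (form1 A s u u)"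
  unfolding Re_form1 Re_form2
proof (rule shifted_quotient_mono)
  show "0 \<le> Re (cinner u u)"
    by (rule cinner_nonneg)
  show "(Re (cinner (A u) u))\<^sup>2 \<le> Re (cinner (A u) (A u)) * Re (cinner u u)"
    using cinner_nonneg Re_form2_nonneg[of A _ u] unfolding Re_form2
    by (rule quadratic_nonneg_imp_discriminant)
  show "t < s" by fact
  show "Re (cinner (A u) u) - t * Re (cinner u u) < 0 \<or> 0 < Re (cinner (A u) u) - s * Re (cinner u u)"
    using assms(10) unfolding Re_form1 .
qed

end
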